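(* Under the CME setup, if $k$ is a characteristic kernel, then $(\mathcal G\otimes\mathcal H)_{\mathcal C}$ is dense in $L^2_{\mathcal C}(\mathbb P_X;\mathcal G)$. Consequently, $[\mathfrak m]\in\overline{(\mathcal G\otimes\mathcal H)_{\mathcal C}}^{L^2_{\mathcal C}(\mathbb P_X;\mathcal G)}$.
   Context: CME setup: - $X:\Omega\to\mathcal X$ and $Y:\Omega\to\mathcal Y$ are random variables, with $\mathcal X$ a measurable space and $\mathcal Y$ a Borel space. - $k$ and $\ell$ are measurable symmetric positive definite kernels on $\mathcal X$ and $\mathcal Y$, with separable RKHSs $\mathcal H$ and $\mathcal G$ respectively. - The feature maps are $\varphi(x)=k(x,\cdot)$, which is assumed injective, and $\psi(y)=\ell(y,\cdot)$. - $V:=\varphi(X)\in L^2(\mathbb P;\mathcal H)$ and $U:=\psi(Y)\in L^2(\mathbb P;\mathcal G)$. - For $h\in\mathcal H$: $\|h\|_{\mathcal H}=0$ iff $h=0$ $\mathbb P_X$-a.e. - $\mathcal C$ is the subspace of $\mathbb P_X$-a.e. constant functions in $L^2(\mathbb P_X;\mathcal G)$, and $L^2_{\mathcal C}(\mathbb P_X;\mathcal G):=L^2(\mathbb P_X;\mathcal G)/\mathcal C$, with inner product $\langle[f_1],[f_2]\rangle=\langle f_1-\mathbb Ef_1(X),f_2-\mathbb Ef_2(X)\rangle_{L^2(\mathbb P_X;\mathcal G)}$. For a subspace $\mathcal U$, $\mathcal U_{\mathcal C}:=\mathcal U/(\mathcal U\cap\mathcal C)$. - $\mathcal G\otimes\mathcal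 H$ is viewed as a subspace of $L^2(\mathbb P_X;\mathcal G)$ via $(g\otimes h)(x)=h(x)g$. - $\mathfrak m(x)=\mathbb E[U|X=x]\in L^2(\mathbb P_X;\mathcal G)$. - The kernel $k$ is characteristic if, for probability measures $Q_1,Q_2$ on $\mathcal X$ for which the mean embeddings $\int\varphi\,dQ_i\in\mathcal H$ exist, $\int\varphi\,dQ_1=\int\varphi\,dQ_2$ implies $Q_1=Q_2$. *)

theory Defs
  imports "HOL-Probability.Probability"
begin

definition L2 :: "'x measure \<Rightarrow> ('x \<Rightarrow> 'g::{real_inner,banach,second_countable_topology}) set" where
  "L2 M = {f. f \<in> borel_measurable M \<and> integrable M (\<lambda>x. (norm (f x))\<^sup>2)}"

text \<open>Norm in the quotient space L2 modulo a.e.-constant functions: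
  the L2 norm of the centred function f - E f.\<close>
definition cnorm :: "'x measure \<Rightarrow> ('x \<Rightarrow> 'g::{real_inner,banach,second_countable_topology}) \<Rightarrow> real" where
  "cnorm M f = sqrt (\<integral>x. (norm (f x - (\<integral>z. f z \<partial>M)))\<^sup>2 \<partial>M)"

text \<open>The (algebraic) tensor product G \<otimes> H viewed as G-valued functions on the input space:
  finite sums of elementary tensors (g \<otimes> h)(x) = h(x) g, where h(x) = <h, phi x>.\<close>
definition tensor_span :: "('x \<Rightarrow> 'h::real_inner) \<Rightarrow> ('x \<Rightarrow> 'g::real_vector) set" where
  "tensor_span \<phi> = {f. \<exists>n (g::nat \<Rightarrow> 'g) (h::nat \<Rightarrow> 'h). f = (\<lambda>x. \<Sum>i<n. (h i \<bullet> \<phi> x) *\<^sub>R g i)}"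

definition in_closure_mod_const :: "'x measure \<Rightarrow> ('x \<Rightarrow> 'g::{real_inner,banach,second_countable_topology}) set \<Rightarrow> ('x \<Rightarrow> 'g) \<Rightarrow> bool" where
  "in_closure_mod_const M S f \<longleftrightarrow> (\<forall>e>0. \<exists>u\<in>S. cnorm M (\<lambda>x. f x - u x) < e)"

definition dense_mod_const :: "'x measure \<Rightarrow> ('x \<Rightarrow> 'g::{real_inner,banach,second_countable_topology}) set \<Rightarrow> bool" where
  "dense_mod_const M S \<longleftrightarrow> (\<forall>f\<in>L2 M. in_closure_mod_const M S f)"

definition characteristic :: "'x measure \<Rightarrow> ('x \<Rightarrow> 'h::{real_inner,banach,second_countable_topology}) \<Rightarrow> bool" where
  "characteristic MX \<phi> \<longleftrightarrow>
     (\<forall>Q1 Q2. prob_space Q1 \<and> prob_space Q2 \<and> sets Q1 = sets MX \<and> sets Q2 = sets MX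
        \<and> integrable Q1 \<phi> \<and> integrable Q2 \<phi>
        \<and> (\<integral>x. \<phi> x \<partial>Q1) = (\<integral>x. \<phi> x \<partial>Q2) \<longrightarrow> Q1 = Q2)"

end

(*
  The space L2(P_X; G) is complete, so the residuals of a minimising sequence for the
  distance from f to (G (x) H) + constants converge, and their limit w is orthogonal to all
  elementary tensors g (x) h and to all constants. For fixed g the real function <w, g> then has
  mean zero and is orthogonal to every x |-> <h, phi x>. Normalising its positive and negative
  parts to probability densities gives two measures with the same kernel mean embedding, so they
  coincide because k is characteristic; hence <w, g> = 0 a.e., and letting g run through a
  countable dense set gives w = 0. Approximation by u + c in L2 controls the norm modulo
  constants because centring minimises the distance to the constants, and [m] is the special case
  f = m. Measurability of phi itself comes from the kernel sections by Pettis' theorem.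
*)
theory Submission
  imports Defs
begin

section \<open>Weakly measurable maps into separable Hilbert spaces\<close>

lemma countable_dense_subsetE:
  obtains D :: "'a::{metric_space,second_countable_topology} set"
  where "countable D" "closure D = UNIV"
proof -
  obtain D :: "'a set" where "countable D" and D: "\<And>X. open X \<Longrightarrow> X \<noteq> {} \<Longrightarrow> \<exists>d\<in>D. d \<in> X"
    by (erule countable_dense_setE)
  have "x \<in> closure D" for x
    unfolding closure_approachable using D[of "ball x _"] by (force simp: dist_commute)
  with \<open>countable D\<close> that show thesis by blast
qed

lemma norm_le_iff_inner_le_on_dense:
  fixes w :: "'a::real_inner"
  assumes D: "closure D = UNIV" and "0 \<le> c"
  shows "norm w \<le> c \<longleftrightarrow> (\<forall>e\<in>D. \<bar>e \<bullet> w\<bar> \<le> c * norm e)"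
proof
  assume "norm w \<le> c"
  then show "\<forall>e\<in>D. \<bar>e \<bullet> w\<bar> \<le> c * norm e"
    by (metis Cauchy_Schwarz_ineq2 mult.commute mult_left_mono norm_ge_zero order_trans)
next
  assume "\<forall>e\<in>D. \<bar>e \<bullet> w\<bar> \<le> c * norm e"
  then have "closure D \<subseteq> {e. \<bar>e \<bullet> w\<bar> \<le> c * norm e}"
    by (intro closure_minimal closed_Collect_le continuous_intros) auto
  then have "\<bar>w \<bullet> w\<bar> \<le> c * norm w"
    using D by blast
  then have "norm w * norm w \<le> c * norm w"
    by (simp flip: power2_eq_square add: power2_norm_eq_inner)
  then show "norm w \<le> c"
    using \<open>0 \<le> c\<close> by (cases "norm w = 0") (auto simp: mult_le_cancel_right)
qed

lemma borel_measurable_dist_if_inner_measurable: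
  fixes f :: "'a \<Rightarrow> 'b::{real_inner,second_countable_topology}"
  assumes f: "\<And>h. (\<lambda>x. h \<bullet> f x) \<in> borel_measurable M"
  shows "(\<lambda>x. dist (f x) d) \<in> borel_measurable M"
proof (unfold borel_measurable_iff_le, intro allI)
  fix c :: real
  obtain D :: "'b set" where "countable D" and D: "closure D = UNIV"
    by (rule countable_dense_subsetE)
  show "{x \<in> space M. dist (f x) d \<le> c} \<in> sets M"
  proof (cases "0 \<le> c")
    case True
    have "{x \<in> space M. dist (f x) d \<le> c}
        = {x \<in> space M. \<forall>e\<in>D. \<bar>e \<bullet> f x - e \<bullet> d\<bar> \<le> c * norm e}"
      using norm_le_iff_inner_le_on_dense[OF D True]
      by (simp add: dist_norm inner_diff_right)
    also have "\<dots> \<in> sets M"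
      using \<open>countable D\<close> f by measurable
    finally show ?thesis .
  next
    case False
    then have "{x \<in> space M. dist (f x) d \<le> c} = {}"
      by (auto intro: order.trans[OF zero_le_dist])
    then show ?thesis by (metis sets.empty_sets)
  qed
qed

lemma borel_measurable_if_inner_measurable:
  fixes f :: "'a \<Rightarrow> 'b::{real_inner,second_countable_topology}"
  assumes f: "\<And>h. (\<lambda>x. h \<bullet> f x) \<in> borel_measurable M"
  shows "f \<in> borel_measurable M"
proof (rule borel_measurableI)
  fix S :: "'b set" assume "open S"
  define \<F> where "\<F> = {ball c r | c r. ball c r \<subseteq> S}"
  obtain \<F>' where "\<F>' \<subseteq> \<F>" "countable \<F>'" "\<Union>\<F>' = \<Union>\<F>"
    by (rule Lindelof[of \<F>]) (auto simp: \<F>_def)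
  moreover have "\<Union>\<F> = S"
  proof
    show "S \<subseteq> \<Union>\<F>"
    proof
      fix x assume "x \<in> S"
      then obtain e where "e > 0" "ball x e \<subseteq> S"
        using \<open>open S\<close> open_contains_ball by blast
      then have "ball x e \<in> \<F>" unfolding \<F>_def by blast
      with \<open>e > 0\<close> show "x \<in> \<Union>\<F>" by (meson UnionI centre_in_ball)
    qed
  qed (unfold \<F>_def, blast)
  ultimately have "f -` S \<inter> space M = (\<Union>B\<in>\<F>'. f -` B \<inter> space M)"
    by blast
  also have "\<dots> \<in> sets M"
  proof (intro sets.countable_UN'' \<open>countable \<F>'\<close>)
    fix B assume "B \<in> \<F>'"
    then obtain c r where "B = ball c r" using \<open>\<F>' \<subseteq> \<F>\<close> by (auto simp: \<F>_def)
    then have "f -` B \<inter> space M = {x \<in> space M. dist (f x) c < r}"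
      by (auto simp: dist_commute)
    also have "\<dots> \<in> sets M"
      using borel_measurable_dist_if_inner_measurable[OF f] by measurable
    finally show "f -` B \<inter> space M \<in> sets M" .
  qed
  finally show "f -` S \<inter> space M \<in> sets M" .
qed

lemma borel_measurable_inner_if_span_dense:
  fixes \<phi> :: "'x \<Rightarrow> 'h::real_inner"
  assumes span: "closure (span (range \<phi>)) = UNIV"
    and kernel: "\<And>x'. (\<lambda>x. \<phi> x \<bullet> \<phi> x') \<in> borel_measurable M"
  shows "(\<lambda>x. h \<bullet> \<phi> x) \<in> borel_measurable M"
proof -
  have span_meas: "(\<lambda>x. s \<bullet> \<phi> x) \<in> borel_measurable M" if "s \<in> span (range \<phi>)" for s
    using that
  proof (induction rule: span_induct_alt)
    case (step c y s)
    then obtain x' where "y = \<phi> x'" by auto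
    then have "(\<lambda>x. (c *\<^sub>R y + s) \<bullet> \<phi> x) = (\<lambda>x. c * (\<phi> x \<bullet> \<phi> x') + s \<bullet> \<phi> x)"
      unfolding inner_add_left inner_scaleR_left by (simp add: inner_commute)
    then show ?case using step kernel[of x'] by simp
  qed simp
  obtain s where s: "\<And>n. s n \<in> span (range \<phi>)" "s \<longlonglongrightarrow> h"
    using span closure_sequential[of h "span (range \<phi>)"] by auto
  show ?thesis
  proof (rule borel_measurable_LIMSEQ_real[where u="\<lambda>n x. s n \<bullet> \<phi> x"])
    show "(\<lambda>n. s n \<bullet> \<phi> x) \<longlonglongrightarrow> h \<bullet> \<phi> x" for x
      by (intro tendsto_intros s)
  qed (use s span_meas in blast)
qed

section \<open>Square-integrable functions\<close>

definition L2_sqnorm :: "'x measure \<Rightarrow> ('x \<Rightarrow> 'g::real_inner) \<Rightarrow> real" where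
  "L2_sqnorm M f = (\<integral>x. (norm (f x))\<^sup>2 \<partial>M)"

definition L2_inner :: "'x measure \<Rightarrow> ('x \<Rightarrow> 'g::real_inner) \<Rightarrow> ('x \<Rightarrow> 'g) \<Rightarrow> real" where
  "L2_inner M f g = (\<integral>x. f x \<bullet> g x \<partial>M)"

lemma L2_borel_measurable: "f \<in> L2 M \<Longrightarrow> f \<in> borel_measurable M"
  by (simp add: L2_def)

lemma L2_integrable_sqnorm: "f \<in> L2 M \<Longrightarrow> integrable M (\<lambda>x. (norm (f x))\<^sup>2)"
  by (simp add: L2_def)

lemma L2_if_norm_le:
  assumes "f \<in> L2 M" "g \<in> borel_measurable M" "\<And>x. norm (g x) \<le> norm (f x)"
  shows "g \<in> L2 M"
  unfolding L2_def
proof (intro CollectI conjI Bochner_Integration.integrable_bound[OF L2_integrable_sqnorm[OF assms(1)]])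
  have "(norm (g x))\<^sup>2 \<le> (norm (f x))\<^sup>2" for x
    by (rule power_mono[OF assms(3) norm_ge_zero])
  then show "AE x in M. norm ((norm (g x))\<^sup>2) \<le> norm ((norm (f x))\<^sup>2)"
    by simp
qed (use assms(2) in measurable)

lemma power2_norm_add_inner:
  "(norm (a + b))\<^sup>2 = (norm a)\<^sup>2 + 2 * (a \<bullet> b) + (norm (b::'a::real_inner))\<^sup>2"
  by (simp add: power2_norm_eq_inner inner_add_left inner_add_right inner_commute)

lemma power2_norm_diff_inner:
  "(norm (a - b))\<^sup>2 = (norm a)\<^sup>2 - 2 * (a \<bullet> b) + (norm (b::'a::real_inner))\<^sup>2"
  by (simp add: power2_norm_eq_inner inner_diff_left inner_diff_right inner_commute)

lemma abs_inner_le_sum_sqnorm: "\<bar>a \<bullet> b\<bar> \<le> (norm a)\<^sup>2 + (norm (b::'a::real_inner))\<^sup>2"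
proof -
  have "\<bar>a \<bullet> b\<bar> \<le> norm a * norm b" by (rule Cauchy_Schwarz_ineq2)
  also have "\<dots> \<le> (norm a)\<^sup>2 + (norm b)\<^sup>2"
    using sum_squares_bound[of "norm a" "norm b"] mult_nonneg_nonneg[OF norm_ge_zero norm_ge_zero, of a b]
    by linarith
  finally show ?thesis .
qed

lemma integrable_inner_L2:
  assumes "f \<in> L2 M" "g \<in> L2 M"
  shows "integrable M (\<lambda>x. f x \<bullet> g x)"
proof (rule Bochner_Integration.integrable_bound)
  show "integrable M (\<lambda>x. (norm (f x))\<^sup>2 + (norm (g x))\<^sup>2)"
    using assms by (intro Bochner_Integration.integrable_add L2_integrable_sqnorm)
  show "(\<lambda>x. f x \<bullet> g x) \<in> borel_measurable M"
    using assms[THEN L2_borel_measurable] by measurable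
  show "AE x in M. norm (f x \<bullet> g x) \<le> norm ((norm (f x))\<^sup>2 + (norm (g x))\<^sup>2)"
    using abs_inner_le_sum_sqnorm by auto
qed

lemma integrable_scaleR_L2:
  fixes z :: "'x \<Rightarrow> real"
  assumes "z \<in> L2 M" "f \<in> L2 M"
  shows "integrable M (\<lambda>x. z x *\<^sub>R f x)"
proof (rule Bochner_Integration.integrable_bound)
  show "integrable M (\<lambda>x. (norm (z x))\<^sup>2 + (norm (f x))\<^sup>2)"
    using assms by (intro Bochner_Integration.integrable_add L2_integrable_sqnorm)
  show "(\<lambda>x. z x *\<^sub>R f x) \<in> borel_measurable M"
    using assms[THEN L2_borel_measurable] by measurable
  have "norm (z x *\<^sub>R f x) \<le> norm ((norm (z x))\<^sup>2 + (norm (f x))\<^sup>2)" for x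
  proof -
    have "norm (z x *\<^sub>R f x) = \<bar>norm (z x) \<bullet> norm (f x)\<bar>"
      by simp
    also have "\<dots> \<le> (norm (norm (z x)))\<^sup>2 + (norm (norm (f x)))\<^sup>2"
      by (rule abs_inner_le_sum_sqnorm)
    finally show ?thesis by simp
  qed
  then show "AE x in M. norm (z x *\<^sub>R f x) \<le> norm ((norm (z x))\<^sup>2 + (norm (f x))\<^sup>2)"
    by (rule AE_I2)
qed

lemma L2_scaleR: "f \<in> L2 M \<Longrightarrow> (\<lambda>x. c *\<^sub>R f x) \<in> L2 M"
  unfolding L2_def
  by (auto simp: power_mult_distrib intro: integrable_mult_right)

lemma L2_add:
  assumes "f \<in> L2 M" "g \<in> L2 M"
  shows "(\<lambda>x. f x + g x) \<in> L2 M"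
proof -
  have "integrable M (\<lambda>x. (norm (f x))\<^sup>2 + 2 * (f x \<bullet> g x) + (norm (g x))\<^sup>2)"
    using assms by (intro Bochner_Integration.integrable_add integrable_mult_right
        L2_integrable_sqnorm integrable_inner_L2)
  moreover have "(\<lambda>x. f x + g x) \<in> borel_measurable M"
    using assms[THEN L2_borel_measurable] by measurable
  ultimately show ?thesis
    by (simp add: L2_def power2_norm_add_inner)
qed

lemma L2_diff:
  assumes "f \<in> L2 M" "g \<in> L2 M"
  shows "(\<lambda>x. f x - g x) \<in> L2 M"
  using L2_add[OF assms(1) L2_scaleR[OF assms(2), of "-1"]] by simp

lemma L2_sqnorm_nonneg: "0 \<le> L2_sqnorm M f"
  unfolding L2_sqnorm_def by simp

lemma L2_sqnorm_scaleR: "L2_sqnorm M (\<lambda>x. c *\<^sub>R f x) = c\<^sup>2 * L2_sqnorm M f"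
  unfolding L2_sqnorm_def by (simp add: power_mult_distrib)

lemma L2_sqnorm_add:
  assumes "f \<in> L2 M" "g \<in> L2 M"
  shows "L2_sqnorm M (\<lambda>x. f x + g x) = L2_sqnorm M f + 2 * L2_inner M f g + L2_sqnorm M g"
  using assms unfolding L2_sqnorm_def L2_inner_def power2_norm_add_inner
  by (simp add: L2_integrable_sqnorm integrable_inner_L2)

lemma L2_sqnorm_diff:
  assumes "f \<in> L2 M" "g \<in> L2 M"
  shows "L2_sqnorm M (\<lambda>x. f x - g x) = L2_sqnorm M f - 2 * L2_inner M f g + L2_sqnorm M g"
  using assms unfolding L2_sqnorm_def L2_inner_def power2_norm_diff_inner
  by (simp add: L2_integrable_sqnorm integrable_inner_L2)

lemma L2_inner_scaleR_right: "L2_inner M f (\<lambda>x. c *\<^sub>R g x) = c * L2_inner M f g"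
  unfolding L2_inner_def by simp

lemma L2_inner_diff_left:
  assumes "f \<in> L2 M" "g \<in> L2 M" "h \<in> L2 M"
  shows "L2_inner M (\<lambda>x. f x - g x) h = L2_inner M f h - L2_inner M g h"
  unfolding L2_inner_def inner_diff_left using assms by (simp add: integrable_inner_L2)

lemma discriminant_le_if_quadratic_bound:
  fixes a N E :: real
  assumes bound: "\<And>t. 2 * t * a \<le> t\<^sup>2 * N + E" and "0 \<le> N"
  shows "a\<^sup>2 \<le> N * E"
proof (cases "N = 0")
  case True
  have "a = 0"
  proof (rule ccontr)
    assume "a \<noteq> 0"
    then have "2 * ((\<bar>E\<bar> + 1) / (2 * a)) * a = \<bar>E\<bar> + 1" by (simp add: field_simps)
    with bound[of "(\<bar>E\<bar> + 1) / (2 * a)"] True show False by simp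
  qed
  with True show ?thesis by simp
next
  case False
  with \<open>0 \<le> N\<close> have "N > 0" by simp
  have "2 * (a / N) * a \<le> (a / N)\<^sup>2 * N + E" by (rule bound)
  then have "a\<^sup>2 / N \<le> E"
    using \<open>N > 0\<close> by (simp add: power2_eq_square field_simps)
  with \<open>N > 0\<close> show ?thesis by (simp add: divide_le_eq mult.commute)
qed

lemma L2_Cauchy_Schwarz:
  assumes "f \<in> L2 M" "g \<in> L2 M"
  shows "\<bar>L2_inner M f g\<bar> \<le> sqrt (L2_sqnorm M f) * sqrt (L2_sqnorm M g)"
proof -
  have "(L2_inner M f g)\<^sup>2 \<le> L2_sqnorm M g * L2_sqnorm M f"
  proof (rule discriminant_le_if_quadratic_bound)
    fix t
    have "0 \<le> L2_sqnorm M (\<lambda>x. f x - t *\<^sub>R g x)" by (rule L2_sqnorm_nonneg)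
    also have "\<dots> = L2_sqnorm M f - 2 * (t * L2_inner M f g) + t\<^sup>2 * L2_sqnorm M g"
      using assms by (simp add: L2_sqnorm_diff L2_scaleR L2_inner_scaleR_right L2_sqnorm_scaleR)
    finally show "2 * t * L2_inner M f g \<le> t\<^sup>2 * L2_sqnorm M g + L2_sqnorm M f" by simp
  qed (rule L2_sqnorm_nonneg)
  then have "sqrt ((L2_inner M f g)\<^sup>2) \<le> sqrt (L2_sqnorm M g * L2_sqnorm M f)"
    by (rule real_sqrt_le_mono)
  then show ?thesis by (simp add: real_sqrt_mult mult.commute)
qed

lemma L2_Minkowski:
  assumes "f \<in> L2 M" "g \<in> L2 M"
  shows "sqrt (L2_sqnorm M (\<lambda>x. f x + g x)) \<le> sqrt (L2_sqnorm M f) + sqrt (L2_sqnorm M g)"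
proof -
  have "L2_sqnorm M (\<lambda>x. f x + g x)
      \<le> L2_sqnorm M f + 2 * (sqrt (L2_sqnorm M f) * sqrt (L2_sqnorm M g)) + L2_sqnorm M g"
    using L2_sqnorm_add[OF assms] L2_Cauchy_Schwarz[OF assms] by linarith
  also have "\<dots> = (sqrt (L2_sqnorm M f) + sqrt (L2_sqnorm M g))\<^sup>2"
    by (simp add: power2_eq_square algebra_simps L2_sqnorm_nonneg)
  finally show ?thesis
    by (simp add: real_le_lsqrt L2_sqnorm_nonneg)
qed

context finite_measure
begin

lemma L2_const: "(\<lambda>x. c) \<in> L2 M"
  unfolding L2_def by auto

lemma L2_integrable:
  assumes "f \<in> L2 M"
  shows "integrable M f"
proof (rule Bochner_Integration.integrable_bound)
  show "integrable M (\<lambda>x. 1 + (norm (f x))\<^sup>2)"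
    using assms by (intro Bochner_Integration.integrable_add L2_integrable_sqnorm) auto
  have "norm (f x) \<le> 1 + (norm (f x))\<^sup>2" for x
    using sum_squares_bound[of "norm (f x)" 1] norm_ge_zero[of "f x"]
    unfolding power2_eq_square by linarith
  then show "AE x in M. norm (f x) \<le> norm (1 + (norm (f x))\<^sup>2)"
    by simp
qed (rule L2_borel_measurable[OF assms])

end

context prob_space
begin

lemma integral_norm_le_L2:
  assumes "f \<in> L2 M"
  shows "(\<integral>x. norm (f x) \<partial>M) \<le> sqrt (L2_sqnorm M f)"
proof -
  have "integrable M (\<lambda>x. norm (f x))"
    using L2_integrable[OF assms] by simp
  then have "variance (\<lambda>x. norm (f x)) = L2_sqnorm M f - (\<integral>x. norm (f x) \<partial>M)\<^sup>2"
    unfolding L2_sqnorm_def by (rule variance_eq[OF _ L2_integrable_sqnorm[OF assms]])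
  with variance_positive[of "\<lambda>x. norm (f x)"] show ?thesis
    by (simp add: real_le_rsqrt)
qed

lemma L2_sqnorm_centered_le:
  assumes "f \<in> L2 M"
  shows "L2_sqnorm M (\<lambda>x. f x - expectation f) \<le> L2_sqnorm M (\<lambda>x. f x - c)"
proof -
  let ?m = "expectation f"
  have "integrable M f" using assms by (rule L2_integrable)
  then have "L2_inner M (\<lambda>x. f x - ?m) (\<lambda>x. ?m - c) = (\<integral>x. f x - ?m \<partial>M) \<bullet> (?m - c)"
    unfolding L2_inner_def by (intro integral_inner_left) auto
  also have "(\<integral>x. f x - ?m \<partial>M) = 0"
    using \<open>integrable M f\<close> by (simp add: prob_space)
  finally have orth: "L2_inner M (\<lambda>x. f x - ?m) (\<lambda>x. ?m - c) = 0" by simp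
  have "L2_sqnorm M (\<lambda>x. f x - c) = L2_sqnorm M (\<lambda>x. (f x - ?m) + (?m - c))"
    by simp
  also have "\<dots> = L2_sqnorm M (\<lambda>x. f x - ?m) + 2 * L2_inner M (\<lambda>x. f x - ?m) (\<lambda>x. ?m - c)
      + L2_sqnorm M (\<lambda>x. ?m - c)"
    by (rule L2_sqnorm_add[OF L2_diff[OF assms L2_const] L2_const])
  also have "\<dots> = L2_sqnorm M (\<lambda>x. f x - ?m) + L2_sqnorm M (\<lambda>x. ?m - c)"
    using orth by simp
  finally show ?thesis using L2_sqnorm_nonneg[of M "\<lambda>x. ?m - c"] by simp
qed

end

section \<open>Completeness of L2\<close>

lemma AE_convergent_if_summable_integral_norm_diff:
  fixes r :: "nat \<Rightarrow> 'a \<Rightarrow> 'b::{banach,second_countable_topology}"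
  assumes [measurable]: "\<And>n. r n \<in> borel_measurable M"
    and integrable: "\<And>n. integrable M (\<lambda>x. norm (r n x - r (Suc n) x))"
    and summable: "summable (\<lambda>n. \<integral>x. norm (r n x - r (Suc n) x) \<partial>M)"
  shows "AE x in M. convergent (\<lambda>n. r n x)"
proof -
  let ?s = "\<lambda>n x. norm (r n x - r (Suc n) x)"
  have "(\<integral>\<^sup>+x. (\<Sum>n. ennreal (?s n x)) \<partial>M) = (\<Sum>n. ennreal (\<integral>x. ?s n x \<partial>M))"
    using integrable by (subst nn_integral_suminf) (auto simp: nn_integral_eq_integral)
  also have "\<dots> \<noteq> \<top>"
    using summable by (rule ennreal_suminf_neq_top) simp
  finally have "AE x in M. (\<Sum>n. ennreal (?s n x)) \<noteq> \<infinity>"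
    by (intro nn_integral_PInf_AE) auto
  then show ?thesis
  proof eventually_elim
    case (elim x)
    then have "summable (\<lambda>n. ?s n x)"
      by (intro summable_suminf_not_top) auto
    then have "summable (\<lambda>n. r n x - r (Suc n) x)"
      by (rule summable_norm_cancel)
    then have "(\<lambda>n. r 0 x - (\<Sum>k<n. r k x - r (Suc k) x)) \<longlonglongrightarrow> r 0 x - (\<Sum>k. r k x - r (Suc k) x)"
      by (intro tendsto_intros summable_LIMSEQ)
    moreover have "r 0 x - (\<Sum>k<n. r k x - r (Suc k) x) = r n x" for n
      using sum_lessThan_telescope'[of "\<lambda>k. r k x" n] by simp
    ultimately show ?case
      by (auto simp: convergent_def)
  qed
qed

lemma L2_sqnorm_telescoping_le:
  fixes r :: "nat \<Rightarrow> 'a \<Rightarrow> 'b::{real_inner,banach,second_countable_topology}"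
  assumes r: "\<And>n. r n \<in> L2 M"
    and step: "\<And>n. sqrt (L2_sqnorm M (\<lambda>x. r n x - r (Suc n) x)) \<le> b * (1/2)^n"
  shows "sqrt (L2_sqnorm M (\<lambda>x. r n x - r (n + j) x)) \<le> 2 * b * (1/2)^n"
proof -
  have "0 \<le> b"
    using order_trans[OF real_sqrt_ge_zero[OF L2_sqnorm_nonneg] step[of 0]] by simp
  have "sqrt (L2_sqnorm M (\<lambda>x. r n x - r (n + j) x)) \<le> 2 * b * (1/2)^n * (1 - (1/2)^j)"
  proof (induction j)
    case 0
    then show ?case by (simp add: L2_sqnorm_def)
  next
    case (Suc j)
    have "(\<lambda>x. r n x - r (n + Suc j) x) = (\<lambda>x. (r n x - r (n + j) x) + (r (n + j) x - r (Suc (n + j)) x))"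
      by auto
    then have "sqrt (L2_sqnorm M (\<lambda>x. r n x - r (n + Suc j) x))
        \<le> sqrt (L2_sqnorm M (\<lambda>x. r n x - r (n + j) x)) + sqrt (L2_sqnorm M (\<lambda>x. r (n + j) x - r (Suc (n + j)) x))"
      by (simp only: L2_Minkowski L2_diff r)
    also have "\<dots> \<le> 2 * b * (1/2)^n * (1 - (1/2)^j) + b * (1/2)^(n + j)"
      using Suc step[of "n + j"] by linarith
    also have "\<dots> = 2 * b * (1/2)^n * (1 - (1/2)^Suc j)"
      by (simp add: power_add field_simps)
    finally show ?case .
  qed
  also have "\<dots> \<le> 2 * b * (1/2)^n"
    using \<open>0 \<le> b\<close> by (simp add: mult_left_le)
  finally show ?thesis .
qed

lemma nn_integral_sqnorm_diff_limit_le: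
  fixes r :: "nat \<Rightarrow> 'a \<Rightarrow> 'b::{real_inner,banach,second_countable_topology}"
  assumes r: "\<And>m. r m \<in> L2 M" and [measurable]: "w \<in> borel_measurable M"
    and lim: "AE x in M. (\<lambda>m. r m x) \<longlonglongrightarrow> w x"
    and Cauchy: "\<And>m. n \<le> m \<Longrightarrow> L2_sqnorm M (\<lambda>x. r n x - r m x) \<le> b"
  shows "(\<integral>\<^sup>+x. ennreal ((norm (r n x - w x))\<^sup>2) \<partial>M) \<le> ennreal b"
proof -
  have [measurable]: "r m \<in> borel_measurable M" for m
    using r by (rule L2_borel_measurable)
  have "(\<integral>\<^sup>+x. ennreal ((norm (r n x - w x))\<^sup>2) \<partial>M)
      = (\<integral>\<^sup>+x. liminf (\<lambda>m. ennreal ((norm (r n x - r m x))\<^sup>2)) \<partial>M)"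
  proof (rule nn_integral_cong_AE)
    show "AE x in M. ennreal ((norm (r n x - w x))\<^sup>2) = liminf (\<lambda>m. ennreal ((norm (r n x - r m x))\<^sup>2))"
      using lim
    proof eventually_elim
      case (elim x)
      then have "(\<lambda>m. ennreal ((norm (r n x - r m x))\<^sup>2)) \<longlonglongrightarrow> ennreal ((norm (r n x - w x))\<^sup>2)"
        by (intro tendsto_ennrealI tendsto_intros)
      then show ?case
        by (rule lim_imp_Liminf[OF trivial_limit_sequentially, symmetric])
    qed
  qed
  also have "\<dots> \<le> liminf (\<lambda>m. \<integral>\<^sup>+x. ennreal ((norm (r n x - r m x))\<^sup>2) \<partial>M)"
    by (intro nn_integral_liminf) measurable
  also have "\<dots> = liminf (\<lambda>m. ennreal (L2_sqnorm M (\<lambda>x. r n x - r m x)))"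
    unfolding L2_sqnorm_def using L2_integrable_sqnorm[OF L2_diff[OF r r]]
    by (subst nn_integral_eq_integral) auto
  also have "\<dots> \<le> limsup (\<lambda>m. ennreal (L2_sqnorm M (\<lambda>x. r n x - r m x)))"
    by (rule Liminf_le_Limsup) simp
  also have "\<dots> \<le> ennreal b"
  proof (rule Limsup_bounded)
    show "\<forall>\<^sub>F m in sequentially. ennreal (L2_sqnorm M (\<lambda>x. r n x - r m x)) \<le> ennreal b"
      using eventually_ge_at_top[of n] by eventually_elim (use Cauchy in \<open>auto intro: ennreal_leI\<close>)
  qed
  finally show ?thesis .
qed

lemma L2_limit_if_uniform_Cauchy:
  fixes r :: "nat \<Rightarrow> 'a \<Rightarrow> 'b::{real_inner,banach,second_countable_topology}"
  assumes r: "\<And>n. r n \<in> L2 M" and [measurable]: "w \<in> borel_measurable M"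
    and lim: "AE x in M. (\<lambda>n. r n x) \<longlonglongrightarrow> w x"
    and Cauchy: "\<And>n m. n \<le> m \<Longrightarrow> L2_sqnorm M (\<lambda>x. r n x - r m x) \<le> B n"
  shows "(\<lambda>x. r n x - w x) \<in> L2 M" "L2_sqnorm M (\<lambda>x. r n x - w x) \<le> B n"
proof -
  have [measurable]: "r n \<in> borel_measurable M"
    using r by (rule L2_borel_measurable)
  have "0 \<le> B n"
    using Cauchy[of n n] L2_sqnorm_nonneg by (meson order.trans order_refl)
  note Fatou = nn_integral_sqnorm_diff_limit_le[OF r _ lim Cauchy, of n]
  show L2: "(\<lambda>x. r n x - w x) \<in> L2 M"
    unfolding L2_def
    using le_less_trans[OF Fatou ennreal_less_top]
    by (auto intro!: integrableI_bounded)
  have "ennreal (L2_sqnorm M (\<lambda>x. r n x - w x)) = (\<integral>\<^sup>+x. ennreal ((norm (r n x - w x))\<^sup>2) \<partial>M)"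
    unfolding L2_sqnorm_def using L2_integrable_sqnorm[OF L2]
    by (subst nn_integral_eq_integral) auto
  with Fatou have "ennreal (L2_sqnorm M (\<lambda>x. r n x - w x)) \<le> ennreal (B n)"
    by simp
  then show "L2_sqnorm M (\<lambda>x. r n x - w x) \<le> B n"
    using ennreal_le_iff[OF \<open>0 \<le> B n\<close>] by blast
qed

lemma (in prob_space) L2_complete:
  fixes r :: "nat \<Rightarrow> 'a \<Rightarrow> 'b::{real_inner,banach,second_countable_topology}"
  assumes r: "\<And>n. r n \<in> L2 M"
    and step: "\<And>n. L2_sqnorm M (\<lambda>x. r n x - r (Suc n) x) \<le> C * (1/4)^n"
  shows "\<exists>w\<in>L2 M. (\<lambda>n. L2_sqnorm M (\<lambda>x. r n x - w x)) \<longlonglongrightarrow> 0"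
proof -
  have [measurable]: "r n \<in> borel_measurable M" for n
    using r by (rule L2_borel_measurable)
  have "0 \<le> C"
    using order_trans[OF L2_sqnorm_nonneg step[of 0]] by simp
  have "sqrt (C * (1/4)^n) = sqrt C * (1/2)^n" for n
  proof -
    have "(1/4::real)^n = ((1/2)^n)\<^sup>2"
      by (simp add: power2_eq_square flip: power_mult_distrib)
    then show ?thesis by (simp add: real_sqrt_mult)
  qed
  then have sqrt_step: "sqrt (L2_sqnorm M (\<lambda>x. r n x - r (Suc n) x)) \<le> sqrt C * (1/2)^n" for n
    using real_sqrt_le_mono[OF step[of n]] by simp
  have L1_step: "(\<integral>x. norm (r n x - r (Suc n) x) \<partial>M) \<le> sqrt C * (1/2)^n" for n
    using integral_norm_le_L2[OF L2_diff[OF r r]] sqrt_step order_trans by blast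
  have "summable (\<lambda>n. \<integral>x. norm (r n x - r (Suc n) x) \<partial>M)"
    by (rule summable_comparison_test'[where g="\<lambda>n. sqrt C * (1/2)^n"])
      (use L1_step in \<open>auto intro: summable_mult summable_geometric\<close>)
  then have "AE x in M. convergent (\<lambda>n. r n x)"
    using L2_integrable[OF L2_diff[OF r r]]
    by (intro AE_convergent_if_summable_integral_norm_diff) auto
  then have lim: "AE x in M. (\<lambda>n. r n x) \<longlonglongrightarrow> lim (\<lambda>n. r n x)"
    by eventually_elim (simp add: convergent_LIMSEQ_iff)
  define w where "w x = lim (\<lambda>n. r n x)" for x
  have [measurable]: "w \<in> borel_measurable M"
    unfolding w_def by measurable
  define B where "B n = (2 * sqrt C * (1/2)^n)\<^sup>2" for n
  have Cauchy: "L2_sqnorm M (\<lambda>x. r n x - r m x) \<le> B n" if nm: "n \<le> m" for n m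
  proof -
    obtain j where "m = n + j" using le_Suc_ex[OF nm] by blast
    then have "sqrt (L2_sqnorm M (\<lambda>x. r n x - r m x)) \<le> 2 * sqrt C * (1/2)^n"
      using L2_sqnorm_telescoping_le[OF r sqrt_step] by blast
    then have "(sqrt (L2_sqnorm M (\<lambda>x. r n x - r m x)))\<^sup>2 \<le> B n"
      unfolding B_def by (rule power_mono) (simp add: L2_sqnorm_nonneg)
    then show ?thesis
      by (simp add: L2_sqnorm_nonneg)
  qed
  note w_limit = L2_limit_if_uniform_Cauchy[OF r _ lim[folded w_def] Cauchy]
  have "w \<in> L2 M"
    using L2_diff[OF r w_limit(1), of 0 0] by simp
  moreover have "(\<lambda>n. L2_sqnorm M (\<lambda>x. r n x - w x)) \<longlonglongrightarrow> 0"
  proof (rule real_tendsto_sandwich[OF _ _ tendsto_const])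
    show "B \<longlonglongrightarrow> 0"
      unfolding B_def by (intro tendsto_eq_intros LIMSEQ_power_zero) auto
  qed (simp_all add: L2_sqnorm_nonneg w_limit(2))
  ultimately show ?thesis by blast
qed

section \<open>Approximation from a subspace with trivial orthogonal complement\<close>

lemma L2_sqnorm_diff_le_if_near_minimal:
  assumes F: "F \<in> L2 M" and u: "u \<in> L2 M" and v: "v \<in> L2 M"
    and "L2_sqnorm M (\<lambda>x. F x - u x) \<le> d + \<epsilon>\<^sub>u" "L2_sqnorm M (\<lambda>x. F x - v x) \<le> d + \<epsilon>\<^sub>v"
    and "d \<le> L2_sqnorm M (\<lambda>x. F x - ((1/2::real) *\<^sub>R u x + (1/2::real) *\<^sub>R v x))"
  shows "L2_sqnorm M (\<lambda>x. u x - v x) \<le> 2 * \<epsilon>\<^sub>u + 2 * \<epsilon>\<^sub>v"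
proof -
  let ?a = "\<lambda>x. F x - u x" and ?b = "\<lambda>x. F x - v x"
  have a: "?a \<in> L2 M" and b: "?b \<in> L2 M"
    using F u v by (auto intro: L2_diff)
  have "(\<lambda>x. ?a x + ?b x) = (\<lambda>x. 2 *\<^sub>R (F x - ((1/2::real) *\<^sub>R u x + (1/2::real) *\<^sub>R v x)))"
    by (simp add: fun_eq_iff scaleR_2 algebra_simps)
  then have "L2_sqnorm M (\<lambda>x. ?a x + ?b x)
      = 4 * L2_sqnorm M (\<lambda>x. F x - ((1/2::real) *\<^sub>R u x + (1/2::real) *\<^sub>R v x))"
    by (simp add: L2_sqnorm_scaleR)
  moreover have "L2_sqnorm M (\<lambda>x. ?a x - ?b x) + L2_sqnorm M (\<lambda>x. ?a x + ?b x)
      = 2 * L2_sqnorm M ?a + 2 * L2_sqnorm M ?b"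
    using L2_sqnorm_diff[OF a b] L2_sqnorm_add[OF a b] by simp
  moreover have "L2_sqnorm M (\<lambda>x. ?a x - ?b x) = L2_sqnorm M (\<lambda>x. u x - v x)"
    by (simp add: L2_sqnorm_def norm_minus_commute)
  ultimately show ?thesis
    using assms(4-6) by linarith
qed

lemma L2_inner_eq_0_if_near_minimal:
  assumes r: "\<And>n. r n \<in> L2 M" and v: "v \<in> L2 M" and w: "w \<in> L2 M"
    and near: "\<And>n. L2_sqnorm M (r n) \<le> d + \<epsilon> n"
    and minimal: "\<And>n t. d \<le> L2_sqnorm M (\<lambda>x. r n x - t *\<^sub>R v x)"
    and "\<epsilon> \<longlonglongrightarrow> 0" and lim: "(\<lambda>n. L2_sqnorm M (\<lambda>x. r n x - w x)) \<longlonglongrightarrow> 0"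
  shows "L2_inner M w v = 0"
proof -
  have "(L2_inner M (r n) v)\<^sup>2 \<le> L2_sqnorm M v * \<epsilon> n" for n
  proof (rule discriminant_le_if_quadratic_bound)
    fix t
    have "d \<le> L2_sqnorm M (r n) - 2 * (t * L2_inner M (r n) v) + t\<^sup>2 * L2_sqnorm M v"
      using minimal[of n t] r v
      by (simp add: L2_sqnorm_diff L2_scaleR L2_inner_scaleR_right L2_sqnorm_scaleR)
    with near[of n] show "2 * t * L2_inner M (r n) v \<le> t\<^sup>2 * L2_sqnorm M v + \<epsilon> n"
      by linarith
  qed (rule L2_sqnorm_nonneg)
  then have inner_r: "\<bar>L2_inner M (r n) v\<bar> \<le> sqrt (L2_sqnorm M v * \<epsilon> n)" for n
    by (metis real_sqrt_abs real_sqrt_le_mono)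
  have bound: "\<bar>L2_inner M w v\<bar>
      \<le> sqrt (L2_sqnorm M v * \<epsilon> n) + sqrt (L2_sqnorm M (\<lambda>x. r n x - w x)) * sqrt (L2_sqnorm M v)" for n
  proof -
    have "L2_inner M w v = L2_inner M (r n) v - L2_inner M (\<lambda>x. r n x - w x) v"
      using L2_inner_diff_left[OF r w v] by simp
    then have "\<bar>L2_inner M w v\<bar> \<le> \<bar>L2_inner M (r n) v\<bar> + \<bar>L2_inner M (\<lambda>x. r n x - w x) v\<bar>"
      by (simp add: abs_triangle_ineq4)
    then show ?thesis
      using inner_r[of n] L2_Cauchy_Schwarz[OF L2_diff[OF r w] v, of n] by linarith
  qed
  have "(\<lambda>n. sqrt (L2_sqnorm M v * \<epsilon> n) + sqrt (L2_sqnorm M (\<lambda>x. r n x - w x)) * sqrt (L2_sqnorm M v))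
      \<longlonglongrightarrow> sqrt (L2_sqnorm M v * 0) + sqrt 0 * sqrt (L2_sqnorm M v)"
    by (intro tendsto_intros \<open>\<epsilon> \<longlonglongrightarrow> 0\<close> lim)
  then have "\<bar>L2_inner M w v\<bar> \<le> 0"
    by (intro LIMSEQ_le_const[where X="\<lambda>n. _ n"]) (use bound in auto)
  then show ?thesis by simp
qed

context prob_space
begin

lemma L2_best_approximation_residual:
  fixes T :: "('a \<Rightarrow> 'b::{real_inner,banach,second_countable_topology}) set"
  assumes T: "T \<subseteq> L2 M" "(\<lambda>x. 0) \<in> T"
    and T_lin: "\<And>u v a b. u \<in> T \<Longrightarrow> v \<in> T \<Longrightarrow> (\<lambda>x. a *\<^sub>R u x + b *\<^sub>R v x) \<in> T"
    and F: "F \<in> L2 M"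
  obtains vs w where "\<And>n. vs n \<in> T" and "w \<in> L2 M"
    and "(\<lambda>n. L2_sqnorm M (\<lambda>x. (F x - vs n x) - w x)) \<longlonglongrightarrow> 0"
    and "\<And>v. v \<in> T \<Longrightarrow> L2_inner M w v = 0"
proof -
  define d where "d = (INF v\<in>T. L2_sqnorm M (\<lambda>x. F x - v x))"
  have d_le: "d \<le> L2_sqnorm M (\<lambda>x. F x - v x)" if "v \<in> T" for v
    unfolding d_def using that by (intro cINF_lower bdd_belowI2[of _ 0] L2_sqnorm_nonneg)
  have "\<exists>v\<in>T. L2_sqnorm M (\<lambda>x. F x - v x) < d + (1/4)^n" for n :: nat
    unfolding d_def using T(2) by (intro cINF_less_iff[THEN iffD1]) (auto intro: bdd_belowI2[of _ 0] L2_sqnorm_nonneg)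
  then obtain vs where vs: "\<And>n. vs n \<in> T"
    and near: "\<And>n. L2_sqnorm M (\<lambda>x. F x - vs n x) \<le> d + (1/4)^n"
    by (metis less_imp_le)
  define r where "r n = (\<lambda>x. F x - vs n x)" for n
  have r: "r n \<in> L2 M" for n
    unfolding r_def using F vs T(1) by (intro L2_diff) auto
  have step: "L2_sqnorm M (\<lambda>x. r n x - r (Suc n) x) \<le> 4 * (1/4)^n" for n
  proof -
    have "(\<lambda>x. (1/2::real) *\<^sub>R vs (Suc n) x + (1/2::real) *\<^sub>R vs n x) \<in> T"
      by (intro T_lin vs)
    then have "d \<le> L2_sqnorm M (\<lambda>x. F x - ((1/2::real) *\<^sub>R vs (Suc n) x + (1/2::real) *\<^sub>R vs n x))"
      by (rule d_le)
    with near[of n] near[of "Suc n"]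
    have "L2_sqnorm M (\<lambda>x. vs (Suc n) x - vs n x) \<le> 2 * (1/4)^Suc n + 2 * (1/4)^n"
      using F vs T(1) by (intro L2_sqnorm_diff_le_if_near_minimal) auto
    then show ?thesis
      by (simp add: r_def) (use zero_le_power[of "1/4::real" n] in linarith)
  qed
  obtain w where w: "w \<in> L2 M" and lim: "(\<lambda>n. L2_sqnorm M (\<lambda>x. r n x - w x)) \<longlonglongrightarrow> 0"
    using L2_complete[OF r step] by blast
  have orth: "L2_inner M w v = 0" if "v \<in> T" for v
  proof (rule L2_inner_eq_0_if_near_minimal[OF r _ w _ _ _ lim])
    show "v \<in> L2 M" using that T(1) by auto
    show "L2_sqnorm M (r n) \<le> d + (1/4)^n" for n
      using near by (simp add: r_def)
    show "d \<le> L2_sqnorm M (\<lambda>x. r n x - t *\<^sub>R v x)" for n t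
      using d_le[OF T_lin[of "vs n" v 1 t, OF vs that]] by (simp add: r_def algebra_simps)
  qed (intro LIMSEQ_power_zero, simp)
  show thesis
    using that[OF vs w _ orth] lim by (simp add: r_def)
qed

lemma L2_dense_if_orthogonal_complement_trivial:
  fixes T :: "('a \<Rightarrow> 'b::{real_inner,banach,second_countable_topology}) set"
  assumes T: "T \<subseteq> L2 M" "(\<lambda>x. 0) \<in> T"
    and T_lin: "\<And>u v a b. u \<in> T \<Longrightarrow> v \<in> T \<Longrightarrow> (\<lambda>x. a *\<^sub>R u x + b *\<^sub>R v x) \<in> T"
    and orth: "\<And>w. w \<in> L2 M \<Longrightarrow> (\<forall>v\<in>T. L2_inner M w v = 0) \<Longrightarrow> AE x in M. w x = 0"
    and F: "F \<in> L2 M" and "e > 0"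
  shows "\<exists>v\<in>T. L2_sqnorm M (\<lambda>x. F x - v x) < e"
proof -
  obtain vs w where vs: "\<And>n. vs n \<in> T" and w: "w \<in> L2 M"
    and lim: "(\<lambda>n. L2_sqnorm M (\<lambda>x. (F x - vs n x) - w x)) \<longlonglongrightarrow> 0"
    and "\<And>v. v \<in> T \<Longrightarrow> L2_inner M w v = 0"
    using L2_best_approximation_residual[OF T T_lin F] by blast
  then have "AE x in M. w x = 0"
    by (intro orth w) blast
  moreover have [measurable]: "w \<in> borel_measurable M" "vs n \<in> borel_measurable M" for n
    using w vs T(1) F by (auto intro: L2_borel_measurable)
  moreover have [measurable]: "F \<in> borel_measurable M"
    using F by (rule L2_borel_measurable)
  ultimately have "L2_sqnorm M (\<lambda>x. (F x - vs n x) - w x) = L2_sqnorm M (\<lambda>x. F x - vs n x)" for n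
    unfolding L2_sqnorm_def by (intro integral_cong_AE) (measurable, auto elim!: eventually_mono)
  with lim have "(\<lambda>n. L2_sqnorm M (\<lambda>x. F x - vs n x)) \<longlonglongrightarrow> 0" by simp
  from order_tendstoD(2)[OF this \<open>e > 0\<close>] obtain n where "L2_sqnorm M (\<lambda>x. F x - vs n x) < e"
    by (auto simp: eventually_sequentially)
  then show ?thesis
    using vs by blast
qed

end

section \<open>Characteristic kernels\<close>

lemma prob_space_density_normalized:
  assumes [measurable]: "f \<in> borel_measurable M"
    and "integrable M f" "\<And>x. 0 \<le> f x" "(\<integral>x. f x \<partial>M) = c" "c > 0"
  shows "prob_space (density M (\<lambda>x. ennreal (f x / c)))"
proof (rule prob_spaceI)
  have "emeasure (density M (\<lambda>x. ennreal (f x / c))) (space M) = (\<integral>\<^sup>+x. ennreal (f x / c) \<partial>M)"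
    by (simp add: emeasure_density nn_integral_density)
  also have "\<dots> = ennreal (\<integral>x. f x / c \<partial>M)"
    using assms by (intro nn_integral_eq_integral) auto
  also have "\<dots> = 1"
    using assms by simp
  finally show "emeasure (density M (\<lambda>x. ennreal (f x / c))) (space (density M (\<lambda>x. ennreal (f x / c)))) = 1"
    by simp
qed

lemma integrable_integral_density_normalized:
  fixes \<phi> :: "'a \<Rightarrow> 'b::{banach,second_countable_topology}"
  assumes [measurable]: "f \<in> borel_measurable M" "\<phi> \<in> borel_measurable M"
    and "\<And>x. 0 \<le> f x" "c > 0" and int: "integrable M (\<lambda>x. f x *\<^sub>R \<phi> x)"
  shows "integrable (density M (\<lambda>x. ennreal (f x / c))) \<phi>"
    and "(\<integral>x. \<phi> x \<partial>density M (\<lambda>x. ennreal (f x / c))) = (1/c) *\<^sub>R (\<integral>x. f x *\<^sub>R \<phi> x \<partial>M)"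
proof -
  have "integrable M (\<lambda>x. (f x / c) *\<^sub>R \<phi> x)"
    using integrable_scaleR_right[OF int, of "1/c"] by simp
  then show "integrable (density M (\<lambda>x. ennreal (f x / c))) \<phi>"
    using assms by (subst integrable_density) auto
  have "(\<integral>x. \<phi> x \<partial>density M (\<lambda>x. ennreal (f x / c))) = (\<integral>x. (f x / c) *\<^sub>R \<phi> x \<partial>M)"
    using assms by (subst integral_density) auto
  also have "\<dots> = (1/c) *\<^sub>R (\<integral>x. f x *\<^sub>R \<phi> x \<partial>M)"
    by (simp flip: integral_scaleR_right)
  finally show "(\<integral>x. \<phi> x \<partial>density M (\<lambda>x. ennreal (f x / c))) = (1/c) *\<^sub>R (\<integral>x. f x *\<^sub>R \<phi> x \<partial>M)" .
qed

lemma AE_eq_if_characteristic_mean_eq: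
  fixes \<phi> :: "'x \<Rightarrow> 'h::{real_inner,banach,second_countable_topology}" and f g :: "'x \<Rightarrow> real"
  assumes "sigma_finite_measure M" "sets M = sets MX" "characteristic MX \<phi>"
    and \<phi>_meas[measurable]: "\<phi> \<in> borel_measurable M"
    and [measurable]: "f \<in> borel_measurable M" "g \<in> borel_measurable M"
    and nonneg: "\<And>x. 0 \<le> f x" "\<And>x. 0 \<le> g x"
    and int: "integrable M f" "integrable M g"
      "integrable M (\<lambda>x. f x *\<^sub>R \<phi> x)" "integrable M (\<lambda>x. g x *\<^sub>R \<phi> x)"
    and mass: "(\<integral>x. f x \<partial>M) = (\<integral>x. g x \<partial>M)"
    and mean: "(\<integral>x. f x *\<^sub>R \<phi> x \<partial>M) = (\<integral>x. g x *\<^sub>R \<phi> x \<partial>M)"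
  shows "AE x in M. f x = g x"
proof -
  interpret sigma_finite_measure M by fact
  define c where "c = (\<integral>x. f x \<partial>M)"
  show ?thesis
  proof (cases "c = 0")
    case True
    then have "(\<integral>x. f x \<partial>M) = 0" "(\<integral>x. g x \<partial>M) = 0"
      using mass by (simp_all add: c_def)
    then have "AE x in M. f x = 0" "AE x in M. g x = 0"
      using int nonneg by (simp_all add: integral_nonneg_eq_0_iff_AE)
    then show ?thesis
      by eventually_elim simp
  next
    case False
    then have "c > 0"
      using nonneg by (simp add: c_def order_less_le)
    define Q where "Q h = density M (\<lambda>x. ennreal (h x / c))" for h
    have "integrable (Q f) \<phi>" "integrable (Q g) \<phi>" "(\<integral>x. \<phi> x \<partial>Q f) = (\<integral>x. \<phi> x \<partial>Q g)"
      using integrable_integral_density_normalized[OF _ \<phi>_meas _ \<open>c > 0\<close>] nonneg int mean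
      by (simp_all add: Q_def)
    moreover have "prob_space (Q f)" "prob_space (Q g)"
      using int nonneg \<open>c > 0\<close> mass unfolding Q_def c_def
      by (auto intro: prob_space_density_normalized)
    moreover have "sets (Q h) = sets MX" for h
      by (simp add: Q_def assms(2))
    ultimately have "Q f = Q g"
      using assms(3) unfolding characteristic_def by auto
    then have "AE x in M. ennreal (f x / c) = ennreal (g x / c)"
      unfolding Q_def by (intro density_unique) measurable
    then show ?thesis
      by eventually_elim (use nonneg \<open>c > 0\<close> in simp)
  qed
qed

lemma AE_zero_if_orthogonal_to_features:
  fixes \<phi> :: "'x \<Rightarrow> 'h::{real_inner,banach,second_countable_topology}" and z :: "'x \<Rightarrow> real"
  assumes "prob_space M" and sets_M: "sets M = sets MX"
    and \<phi>: "\<phi> \<in> L2 M" and char: "characteristic MX \<phi>"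
    and z: "z \<in> L2 M" and mean: "(\<integral>x. z x \<partial>M) = 0"
    and orth: "\<And>h. (\<integral>x. z x * (h \<bullet> \<phi> x) \<partial>M) = 0"
  shows "AE x in M. z x = 0"
proof -
  interpret prob_space M by fact
  have [measurable]: "z \<in> borel_measurable M" "\<phi> \<in> borel_measurable M"
    using z \<phi> by (auto intro: L2_borel_measurable)
  define V where "V = (\<integral>x. z x *\<^sub>R \<phi> x \<partial>M)"
  have "V \<bullet> V = (\<integral>x. z x * (V \<bullet> \<phi> x) \<partial>M)"
    unfolding V_def using integrable_scaleR_L2[OF z \<phi>]
    by (simp flip: integral_inner_left add: inner_commute)
  with orth have "V = 0" by simp
  define p where "p x = max 0 (z x)" for x
  define n where "n x = max 0 (- z x)" for x
  have z_eq: "z x = p x - n x" for x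
    by (simp add: p_def n_def)
  have meas[measurable]: "p \<in> borel_measurable M" "n \<in> borel_measurable M"
    unfolding p_def n_def by measurable
  have nonneg: "0 \<le> p x" "0 \<le> n x" for x
    by (simp_all add: p_def n_def)
  have "p \<in> L2 M" "n \<in> L2 M"
    unfolding p_def n_def by (auto intro!: L2_if_norm_le[OF z])
  then have int: "integrable M p" "integrable M n"
    "integrable M (\<lambda>x. p x *\<^sub>R \<phi> x)" "integrable M (\<lambda>x. n x *\<^sub>R \<phi> x)"
    using \<phi> by (auto intro: L2_integrable integrable_scaleR_L2)
  have "AE x in M. p x = n x"
  proof (rule AE_eq_if_characteristic_mean_eq[OF _ sets_M char])
    show "(\<integral>x. p x \<partial>M) = (\<integral>x. n x \<partial>M)"
      using mean int by (simp add: z_eq)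
    show "(\<integral>x. p x *\<^sub>R \<phi> x \<partial>M) = (\<integral>x. n x *\<^sub>R \<phi> x \<partial>M)"
      using \<open>V = 0\<close> int by (simp add: V_def z_eq scaleR_diff_left)
  qed (use int nonneg meas sigma_finite_measure_axioms in auto)
  then show ?thesis
    by eventually_elim (simp add: p_def n_def max_def split: if_splits)
qed

section \<open>The algebraic tensor product as a space of functions\<close>

lemma tensor_span_zero: "(\<lambda>x. 0) \<in> tensor_span \<phi>"
  unfolding tensor_span_def by (rule CollectI, rule exI[of _ 0]) simp

lemma tensor_span_add_elementary:
  assumes "u \<in> tensor_span \<phi>"
  shows "(\<lambda>x. u x + (h \<bullet> \<phi> x) *\<^sub>R g) \<in> tensor_span \<phi>"
proof -
  from assms obtain n :: nat and gs hs where u: "u = (\<lambda>x. \<Sum>i<n. (hs i \<bullet> \<phi> x) *\<^sub>R gs i)"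
    unfolding tensor_span_def by blast
  have "(\<lambda>x. u x + (h \<bullet> \<phi> x) *\<^sub>R g) = (\<lambda>x. \<Sum>i<Suc n. ((hs(n := h)) i \<bullet> \<phi> x) *\<^sub>R (gs(n := g)) i)"
    unfolding u by (auto intro!: sum.cong)
  then show ?thesis
    unfolding tensor_span_def by blast
qed

lemma tensor_span_induct[consumes 1, case_names zero add_elementary]:
  assumes "u \<in> tensor_span \<phi>"
    and "P (\<lambda>x. 0)"
    and "\<And>u h g. u \<in> tensor_span \<phi> \<Longrightarrow> P u \<Longrightarrow> P (\<lambda>x. u x + (h \<bullet> \<phi> x) *\<^sub>R g)"
  shows "P u"
proof -
  from assms(1) obtain n :: nat and gs hs where u: "u = (\<lambda>x. \<Sum>i<n. (hs i \<bullet> \<phi> x) *\<^sub>R gs i)"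
    unfolding tensor_span_def by blast
  have "(\<lambda>x. \<Sum>i<k. (hs i \<bullet> \<phi> x) *\<^sub>R gs i) \<in> tensor_span \<phi> \<and> P (\<lambda>x. \<Sum>i<k. (hs i \<bullet> \<phi> x) *\<^sub>R gs i)" for k
  proof (induction k)
    case 0
    then show ?case using assms(2) tensor_span_zero by simp
  next
    case (Suc k)
    then show ?case
      using tensor_span_add_elementary assms(3) by fastforce
  qed
  then show ?thesis unfolding u by blast
qed

lemma tensor_span_elementary: "(\<lambda>x. (h \<bullet> \<phi> x) *\<^sub>R g) \<in> tensor_span \<phi>"
  using tensor_span_add_elementary[OF tensor_span_zero] by simp

lemma tensor_span_add:
  assumes "u \<in> tensor_span \<phi>" "v \<in> tensor_span \<phi>"
  shows "(\<lambda>x. u x + v x) \<in> tensor_span \<phi>"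
  using assms(2)
proof (induction rule: tensor_span_induct)
  case zero
  then show ?case using assms(1) by simp
next
  case (add_elementary v h g)
  then show ?case
    using tensor_span_add_elementary[of "\<lambda>x. u x + v x" \<phi> h g] by (simp add: add.assoc)
qed

lemma tensor_span_scaleR:
  assumes "u \<in> tensor_span \<phi>"
  shows "(\<lambda>x. a *\<^sub>R u x) \<in> tensor_span \<phi>"
  using assms
proof (induction rule: tensor_span_induct)
  case zero
  then show ?case by (simp add: tensor_span_zero)
next
  case (add_elementary u h g)
  then show ?case
    using tensor_span_add_elementary[of "\<lambda>x. a *\<^sub>R u x" \<phi> "a *\<^sub>R h" g] by (simp add: scaleR_add_right)
qed

lemma tensor_span_subset_L2:
  fixes \<phi> :: "'x \<Rightarrow> 'h::{real_inner,banach,second_countable_topology}"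
  assumes \<phi>: "\<phi> \<in> L2 M"
  shows "(tensor_span \<phi> :: ('x \<Rightarrow> 'g::{real_inner,banach,second_countable_topology}) set) \<subseteq> L2 M"
proof
  fix u :: "'x \<Rightarrow> 'g" assume "u \<in> tensor_span \<phi>"
  then show "u \<in> L2 M"
  proof (induction rule: tensor_span_induct)
    case zero
    then show ?case by (simp add: L2_def)
  next
    case (add_elementary u h g)
    have [measurable]: "\<phi> \<in> borel_measurable M"
      using \<phi> by (rule L2_borel_measurable)
    have "norm ((h \<bullet> \<phi> x) *\<^sub>R g) \<le> norm ((norm h * norm g) *\<^sub>R \<phi> x)" for x
      using mult_left_mono[OF Cauchy_Schwarz_ineq2[of h "\<phi> x"] norm_ge_zero[of g]]
      by (simp add: mult_ac)
    then have "(\<lambda>x. (h \<bullet> \<phi> x) *\<^sub>R g) \<in> L2 M"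
      by (intro L2_if_norm_le[OF L2_scaleR[OF \<phi>]]) measurable
    with add_elementary.IH show ?case by (rule L2_add)
  qed
qed

section \<open>Density modulo constants\<close>

lemma AE_zero_if_orthogonal_to_tensor_span_plus_constants:
  fixes \<phi> :: "'x \<Rightarrow> 'h::{real_inner,banach,second_countable_topology}"
    and w :: "'x \<Rightarrow> 'g::{real_inner,banach,second_countable_topology}"
  assumes "prob_space M" "sets M = sets MX" "\<phi> \<in> L2 M" "characteristic MX \<phi>"
    and w: "w \<in> L2 M"
    and orth: "\<And>u c. u \<in> tensor_span \<phi> \<Longrightarrow> L2_inner M w (\<lambda>x. u x + c) = 0"
  shows "AE x in M. w x = 0"
proof -
  have [measurable]: "w \<in> borel_measurable M"
    using w by (rule L2_borel_measurable)
  have AE_g: "AE x in M. w x \<bullet> g = 0" for g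
  proof (rule AE_zero_if_orthogonal_to_features[OF assms(1-4)])
    have "norm (w x \<bullet> g) \<le> norm (norm g *\<^sub>R w x)" for x
      using Cauchy_Schwarz_ineq2[of "w x" g] by (simp add: mult.commute)
    then show "(\<lambda>x. w x \<bullet> g) \<in> L2 M"
      by (intro L2_if_norm_le[OF L2_scaleR[OF w]]) measurable
    show "(\<integral>x. w x \<bullet> g \<partial>M) = 0"
      using orth[OF tensor_span_zero, of g] by (simp add: L2_inner_def)
    show "(\<integral>x. (w x \<bullet> g) * (h \<bullet> \<phi> x) \<partial>M) = 0" for h
      using orth[OF tensor_span_elementary, of h g 0] by (simp add: L2_inner_def mult.commute)
  qed
  obtain D :: "'g set" where "countable D" and D: "closure D = UNIV"
    by (rule countable_dense_subsetE)
  have "AE x in M. \<forall>g\<in>D. w x \<bullet> g = 0"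
    using \<open>countable D\<close> AE_g by (subst AE_ball_countable) auto
  then show ?thesis
  proof eventually_elim
    case (elim x)
    then have "closure D \<subseteq> {g. w x \<bullet> g = 0}"
      by (intro closure_minimal closed_Collect_eq continuous_intros) auto
    with D have "w x \<bullet> w x = 0" by blast
    then show ?case by simp
  qed
qed

lemma dense_mod_const_tensor_span:
  fixes \<phi> :: "'x \<Rightarrow> 'h::{real_inner,banach,second_countable_topology}"
  assumes "prob_space M" "sets M = sets MX" "\<phi> \<in> L2 M" "characteristic MX \<phi>"
  shows "dense_mod_const M (tensor_span \<phi> :: ('x \<Rightarrow> 'g::{real_inner,banach,second_countable_topology}) set)"
  unfolding dense_mod_const_def in_closure_mod_const_def
proof (intro ballI allI impI)
  interpret prob_space M by fact
  fix f :: "'x \<Rightarrow> 'g" and e :: real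
  assume f: "f \<in> L2 M" and "e > 0"
  define T where "T = {(\<lambda>x. u x + c) | u c. u \<in> (tensor_span \<phi> :: ('x \<Rightarrow> 'g) set)}"
  have "T \<subseteq> L2 M"
    using tensor_span_subset_L2[OF assms(3)] by (auto simp: T_def intro!: L2_add L2_const)
  moreover have "(\<lambda>x. 0) \<in> T"
    unfolding T_def using tensor_span_zero by force
  moreover have "(\<lambda>x. a *\<^sub>R u x + b *\<^sub>R v x) \<in> T" if "u \<in> T" "v \<in> T" for u v a b
  proof -
    from that obtain u' c v' d where "u' \<in> tensor_span \<phi>" "u = (\<lambda>x. u' x + c)"
      "v' \<in> tensor_span \<phi>" "v = (\<lambda>x. v' x + d)"
      unfolding T_def by blast
    then show ?thesis
      unfolding T_def
      by (intro CollectI exI[of _ "\<lambda>x. a *\<^sub>R u' x + b *\<^sub>R v' x"] exI[of _ "a *\<^sub>R c + b *\<^sub>R d"])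
        (auto simp: algebra_simps intro: tensor_span_add tensor_span_scaleR)
  qed
  moreover have "AE x in M. w x = 0" if "w \<in> L2 M" "\<forall>v\<in>T. L2_inner M w v = 0" for w
    using that by (intro AE_zero_if_orthogonal_to_tensor_span_plus_constants[OF assms]) (auto simp: T_def)
  ultimately obtain v where "v \<in> T" and v: "L2_sqnorm M (\<lambda>x. f x - v x) < e\<^sup>2"
    using L2_dense_if_orthogonal_complement_trivial[OF _ _ _ _ f, of T "e\<^sup>2"] \<open>e > 0\<close> by auto
  then obtain u c where u: "u \<in> tensor_span \<phi>" and v_eq: "v = (\<lambda>x. u x + c)"
    unfolding T_def by blast
  have "cnorm M (\<lambda>x. f x - u x) = sqrt (L2_sqnorm M (\<lambda>x. (f x - u x) - expectation (\<lambda>x. f x - u x)))"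
    by (simp add: cnorm_def L2_sqnorm_def)
  also have "\<dots> \<le> sqrt (L2_sqnorm M (\<lambda>x. (f x - u x) - c))"
    using tensor_span_subset_L2[OF assms(3)] u f
    by (intro real_sqrt_le_mono L2_sqnorm_centered_le L2_diff) auto
  also have "\<dots> = sqrt (L2_sqnorm M (\<lambda>x. f x - v x))"
    by (simp add: v_eq algebra_simps)
  also have "\<dots> < e"
    using real_sqrt_less_mono[OF v] \<open>e > 0\<close> by simp
  finally show "\<exists>u\<in>tensor_span \<phi>. cnorm M (\<lambda>x. f x - u x) < e"
    using u by blast
qed

theorem mainTheorem16:
  fixes P :: "'a measure" and MX :: "'x measure" and MY :: "'y measure"
    and X :: "'a \<Rightarrow> 'x" and Y :: "'a \<Rightarrow> 'y"
    and \<phi> :: "'x \<Rightarrow> 'h::{real_inner,banach,second_countable_topology}"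
    and \<psi> :: "'y \<Rightarrow> 'g::{real_inner,banach,second_countable_topology}"
    and m :: "'x \<Rightarrow> 'g"
  assumes P: "prob_space P"
    and X: "X \<in> measurable P MX" and Y: "Y \<in> measurable P MY"
    \<comment> \<open>H and G are the RKHSs generated by the feature maps (span of features dense)\<close>
    and H_rkhs: "closure (span (range \<phi>)) = UNIV"
    and G_rkhs: "closure (span (range \<psi>)) = UNIV"
    \<comment> \<open>measurable kernels k(x,x') = <phi x, phi x'>, l(y,y') = <psi y, psi y'>\<close>
    and k_meas: "\<And>x'. (\<lambda>x. \<phi> x \<bullet> \<phi> x') \<in> borel_measurable MX"
    and l_meas: "\<And>y'. (\<lambda>y. \<psi> y \<bullet> \<psi> y') \<in> borel_measurable MY"
    and \<phi>_inj: "inj \<phi>"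
    \<comment> \<open>V = phi(X) in L2(P;H), U = psi(Y) in L2(P;G)\<close>
    and V_L2: "(\<lambda>\<omega>. \<phi> (X \<omega>)) \<in> L2 P"
    and U_L2: "(\<lambda>\<omega>. \<psi> (Y \<omega>)) \<in> L2 P"
    \<comment> \<open>||h||_H = 0 iff h = 0 P_X-a.e.\<close>
    and H_ae: "\<And>h. (AE x in distr P MX X. h \<bullet> \<phi> x = 0) \<Longrightarrow> h = 0"
    \<comment> \<open>m(x) = E[U | X = x], an element of L2(P_X;G)\<close>
    and m_L2: "m \<in> L2 (distr P MX X)"
    and m_int: "integrable P (\<lambda>\<omega>. m (X \<omega>))"
    and m_cond: "\<And>A. A \<in> sets MX \<Longrightarrow>
        (\<integral>\<omega>. indicator (X -` A \<inter> space P) \<omega> *\<^sub>R \<psi> (Y \<omega>) \<partial>P)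
      = (\<integral>\<omega>. indicator (X -` A \<inter> space P) \<omega> *\<^sub>R m (X \<omega>) \<partial>P)"
    and char: "characteristic MX \<phi>"
  shows "dense_mod_const (distr P MX X) (tensor_span \<phi> :: ('x \<Rightarrow> 'g) set)
       \<and> in_closure_mod_const (distr P MX X) (tensor_span \<phi>) m"
proof -
  have "\<phi> \<in> borel_measurable MX"
    using borel_measurable_inner_if_span_dense[OF H_rkhs k_meas]
    by (rule borel_measurable_if_inner_measurable)
  then have "\<phi> \<in> L2 (distr P MX X)"
    using V_L2 X by (simp add: L2_def integrable_distr_eq)
  then have "dense_mod_const (distr P MX X) (tensor_span \<phi> :: ('x \<Rightarrow> 'g) set)"
    using P X char by (intro dense_mod_const_tensor_span prob_space.prob_space_distr) auto
  with m_L2 show ?thesis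
    unfolding dense_mod_const_def by blast
qed

end
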